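(* Let $X$ be an infinite set with the discrete topology and let $G$ be a subgroup of the permutation group $\mathrm S(X)$ endowed with the permutation topology $\tau_\partial$. Then the Roelcke uniformity $L\wedge R$ of $G$ coincides with the uniformity $R_{\mathcal K}$, whose base consists of the coverings $\{O g\,\mathrm{St}_{x_1,\dots,x_n}\mid g\in G\}$ with $O$ a neighbourhood of the identity of $G$ and $x_1,\dots,x_n\in X$, $n\in\mathbb N$.
   Context: The permutation topology $\tau_\partial$ on $G$ is the group topology in which the pointwise stabilizers $\mathrm{St}_{x_1,\dots,x_n}=\{g\in G\mid g(x_i)=x_i\}$, $x_1,\dots,x_n\in X$, form a base of neighbourhoods of the identity. The Roelcke uniformity $L\wedge R$ is the greatest lower bound of the left and right uniformities; its base consists of the coverings $\{UgU\mid g\in G\}$, $U$ a neighbourhood of the identity. *)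

theory Defs
  imports "HOL-Combinatorics.Permutations"
begin

definition perm_subgroup :: "'a set \<Rightarrow> ('a \<Rightarrow> 'a) set \<Rightarrow> bool" where
  "perm_subgroup X G \<longleftrightarrow> (\<forall>g\<in>G. g permutes X) \<and> id \<in> G \<and>
     (\<forall>g\<in>G. \<forall>h\<in>G. g \<circ> h \<in> G) \<and> (\<forall>g\<in>G. inv g \<in> G)"

definition stab :: "('a \<Rightarrow> 'a) set \<Rightarrow> 'a set \<Rightarrow> ('a \<Rightarrow> 'a) set" where
  "stab G F = {g\<in>G. \<forall>x\<in>F. g x = x}"

text \<open>Neighbourhoods of the identity of G in the permutation topology.\<close>
definition perm_nhd_id :: "'a set \<Rightarrow> ('a \<Rightarrow> 'a) set \<Rightarrow> ('a \<Rightarrow> 'a) set \<Rightarrow> bool" where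
  "perm_nhd_id X G U \<longleftrightarrow> U \<subseteq> G \<and> (\<exists>F. finite F \<and> F \<subseteq> X \<and> stab G F \<subseteq> U)"

definition setcomp :: "('a \<Rightarrow> 'a) set \<Rightarrow> ('a \<Rightarrow> 'a) set \<Rightarrow> ('a \<Rightarrow> 'a) set" where
  "setcomp A B = {a \<circ> b | a b. a \<in> A \<and> b \<in> B}"

definition roelcke_base :: "'a set \<Rightarrow> ('a \<Rightarrow> 'a) set \<Rightarrow> ('a \<Rightarrow> 'a) set set set" where
  "roelcke_base X G = {(\<lambda>g. setcomp (setcomp U {g}) U) ` G | U. perm_nhd_id X G U}"

definition RK_base :: "'a set \<Rightarrow> ('a \<Rightarrow> 'a) set \<Rightarrow> ('a \<Rightarrow> 'a) set set set" where
  "RK_base X G = {(\<lambda>g. setcomp (setcomp V {g}) (stab G F)) ` G | V F.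
                    perm_nhd_id X G V \<and> finite F \<and> F \<subseteq> X}"

definition refines :: "'b set set \<Rightarrow> 'b set set \<Rightarrow> bool" where
  "refines C D \<longleftrightarrow> (\<forall>A\<in>C. \<exists>B\<in>D. A \<subseteq> B)"

definition unif_from_base :: "'b set \<Rightarrow> 'b set set set \<Rightarrow> 'b set set set" where
  "unif_from_base S Base = {C. C \<subseteq> Pow S \<and> \<Union>C = S \<and> (\<exists>B\<in>Base. refines B C)}"

end

theory Submission
  imports Defs
begin

text \<open>Since the pointwise stabilizers form a base at the identity, each covering of either
  kind is refined by one of the other kind: if \<open>St\<^sub>F \<subseteq> U\<close> then \<open>U g St\<^sub>F \<subseteq> U g U\<close>, and
  conversely \<open>U = St\<^bsub>F \<union> F'\<^esub>\<close> with \<open>St\<^bsub>F'\<^esub> \<subseteq> V\<close> gives \<open>U g U \<subseteq> V g St\<^sub>F\<close>.\<close>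

lemma refines_trans: "refines A B \<Longrightarrow> refines B C \<Longrightarrow> refines A C"
  unfolding refines_def by (meson order_trans)

lemma refines_image_mono:
  assumes "\<And>g. g \<in> G \<Longrightarrow> f g \<subseteq> h g"
  shows "refines (f ` G) (h ` G)"
  unfolding refines_def using assms by blast

lemma unif_from_base_mono:
  assumes "\<And>B. B \<in> Base1 \<Longrightarrow> \<exists>B'\<in>Base2. refines B' B"
  shows "unif_from_base S Base1 \<subseteq> unif_from_base S Base2"
proof
  fix C assume "C \<in> unif_from_base S Base1"
  then obtain B where C: "C \<subseteq> Pow S" "\<Union>C = S" and B: "B \<in> Base1" "refines B C"
    unfolding unif_from_base_def by blast
  obtain B' where "B' \<in> Base2" "refines B' B"
    using assms[OF B(1)] by blast
  then show "C \<in> unif_from_base S Base2"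
    unfolding unif_from_base_def using C B(2) refines_trans by blast
qed

lemma setcomp_mono: "A \<subseteq> A' \<Longrightarrow> B \<subseteq> B' \<Longrightarrow> setcomp A B \<subseteq> setcomp A' B'"
  unfolding setcomp_def by blast

lemma stab_antimono: "F \<subseteq> F' \<Longrightarrow> stab G F' \<subseteq> stab G F"
  unfolding stab_def by blast

lemma perm_nhd_id_stab: "finite F \<Longrightarrow> F \<subseteq> X \<Longrightarrow> perm_nhd_id X G (stab G F)"
  unfolding perm_nhd_id_def stab_def by blast

lemma RK_base_refined_by_roelcke_base:
  assumes "B \<in> RK_base X G"
  shows "\<exists>R\<in>roelcke_base X G. refines R B"
proof -
  obtain V F where B: "B = (\<lambda>g. setcomp (setcomp V {g}) (stab G F)) ` G"
    and V: "perm_nhd_id X G V" and F: "finite F" "F \<subseteq> X"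
    using assms unfolding RK_base_def by blast
  obtain F' where F': "finite F'" "F' \<subseteq> X" "stab G F' \<subseteq> V"
    using V unfolding perm_nhd_id_def by blast
  define U where "U = stab G (F \<union> F')"
  have "U \<subseteq> V" "U \<subseteq> stab G F"
    using F'(3) stab_antimono[of F' "F \<union> F'" G] stab_antimono[of F "F \<union> F'" G]
    unfolding U_def by auto
  then have "refines ((\<lambda>g. setcomp (setcomp U {g}) U) ` G) B"
    unfolding B by (intro refines_image_mono setcomp_mono order_refl)
  moreover have "(\<lambda>g. setcomp (setcomp U {g}) U) ` G \<in> roelcke_base X G"
    using perm_nhd_id_stab[of "F \<union> F'" X G] F F' unfolding roelcke_base_def U_def by auto
  ultimately show ?thesis by blast
qed

lemma roelcke_base_refined_by_RK_base:
  assumes "B \<in> roelcke_base X G"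
  shows "\<exists>R\<in>RK_base X G. refines R B"
proof -
  obtain U where B: "B = (\<lambda>g. setcomp (setcomp U {g}) U) ` G" and U: "perm_nhd_id X G U"
    using assms unfolding roelcke_base_def by blast
  obtain F where F: "finite F" "F \<subseteq> X" "stab G F \<subseteq> U"
    using U unfolding perm_nhd_id_def by blast
  have "refines ((\<lambda>g. setcomp (setcomp U {g}) (stab G F)) ` G) B"
    unfolding B by (intro refines_image_mono setcomp_mono F(3) order_refl)
  moreover have "(\<lambda>g. setcomp (setcomp U {g}) (stab G F)) ` G \<in> RK_base X G"
    using U F(1,2) unfolding RK_base_def by auto
  ultimately show ?thesis by blast
qed

theorem proposition3p0:
  fixes X :: "'a set" and G :: "('a \<Rightarrow> 'a) set"
  assumes "infinite X" and "perm_subgroup X G"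
  shows "unif_from_base G (roelcke_base X G) = unif_from_base G (RK_base X G)"
  using unif_from_base_mono[OF roelcke_base_refined_by_RK_base]
    unif_from_base_mono[OF RK_base_refined_by_roelcke_base]
  by (intro equalityI)

end
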